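(* Let $\Gamma$ be a set and $\Lambda:\Gamma\to\mathbb R^{m\times m}$ with sparsity pattern $S$. Let $L\in\mathbb R^{m\times m}$ be invertible and let $\hat S$ be the sparsity pattern of $\hat\Lambda(\cdot):=L^\top\Lambda(\cdot)L$. Let $\sigma$ be a permutation of $\{1,\dots,m\}$ with $L_{i,\sigma(i)}\neq0$ for all $i$ (such a $\sigma$ exists since $L$ is invertible) and $P$ its permutation matrix, $Pe_i=e_{\sigma(i)}$. Assume $\operatorname{span}(\Lambda(\Gamma))=\mathbb R^{m\times m}_S$. Then $S\subset P^\top\hat SP$ (as sets of nonzero entries). If moreover $\|\hat S\|_0\le\|S\|_0$, then $S=P^\top\hat SP$ and $L=CP^\top$ for some matrix $C$ that is both $S$-consistent and $S^\top$-consistent.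
   Context: Sparsity pattern: for $\Lambda:\Gamma\to\mathbb R^{m\times n}$, its sparsity pattern is the binary matrix $S$ with $S_{i,j}=1$ iff there exists $\gamma\in\Gamma$ with $\Lambda_{i,j}(\gamma)\neq0$. $\mathbb R^{m\times n}_B=\{M\in\mathbb R^{m\times n}: B_{ij}=0\Rightarrow M_{ij}=0\}$. $\|\cdot\|_0$ counts nonzero entries. $S$-consistency: for $S\in\{0,1\}^{m\times n}$, $C\in\mathbb R^{m\times m}$ is $S$-consistent iff for all $i,j$: $[\mathbb 1-S(\mathbb 1-S)^\top]^+_{i,j}=0\Rightarrow C_{i,j}=0$, with $[\cdot]^+=\max\{0,\cdot\}$ entrywise and $\mathbb 1$ an all-ones matrix of appropriate size. *)

theory Defs
  imports "HOL-Analysis.Analysis"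
begin

definition sparsity_pattern :: "'g set \<Rightarrow> ('g \<Rightarrow> real^'n^'m) \<Rightarrow> real^'n^'m" where
  "sparsity_pattern \<Gamma> \<Lambda> = (\<chi> i j. if \<exists>\<gamma>\<in>\<Gamma>. \<Lambda> \<gamma> $ i $ j \<noteq> 0 then 1 else 0)"

definition supported_on :: "real^'n^'m \<Rightarrow> (real^'n^'m) set" where
  "supported_on B = {M. \<forall>i j. B $ i $ j = 0 \<longrightarrow> M $ i $ j = 0}"

definition nnz :: "real^'n^'m \<Rightarrow> nat" where
  "nnz M = card {(i, j). M $ i $ j \<noteq> 0}"

definition perm_matrix :: "('m \<Rightarrow> 'm) \<Rightarrow> real^'m^'m" where
  "perm_matrix \<sigma> = (\<chi> r c. if r = \<sigma> c then 1 else 0)"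

definition S_consistent :: "real^'n^'m \<Rightarrow> real^'m^'m \<Rightarrow> bool" where
  "S_consistent S C \<longleftrightarrow>
     (let M = ((\<chi> i j. 1) :: real^'m^'m) - S ** transpose ((\<chi> i j. 1) - S)
      in \<forall>i j. max 0 (M $ i $ j) = 0 \<longrightarrow> C $ i $ j = 0)"

end

theory Submission
  imports Defs
begin

text \<open>
  The linear functional \<open>M \<mapsto> (L\<^sup>T M L)\<^sub>p\<^sub>q\<close> vanishes on \<open>\<Lambda>(\<Gamma>)\<close> whenever \<open>\<hat>S\<^sub>p\<^sub>q = 0\<close>,
  hence on the span of \<open>\<Lambda>(\<Gamma>)\<close>, which contains the elementary matrix \<open>E\<^sub>a\<^sub>b\<close> for every
  \<open>S\<^sub>a\<^sub>b \<noteq> 0\<close>; its value there is \<open>L\<^sub>a\<^sub>p L\<^sub>b\<^sub>q\<close>. So \<open>S\<^sub>a\<^sub>b \<noteq> 0\<close>, \<open>L\<^sub>a\<^sub>p \<noteq> 0\<close>, \<open>L\<^sub>b\<^sub>q \<noteq> 0\<close>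
  force \<open>\<hat>S\<^sub>p\<^sub>q \<noteq> 0\<close>; taking \<open>p = \<sigma> a\<close>, \<open>q = \<sigma> b\<close> gives \<open>S \<subseteq> P\<^sup>T \<hat>S P\<close>.
  If \<open>\<hat>S\<close> has no more nonzero entries than \<open>S\<close>, the injection \<open>(a, b) \<mapsto> (\<sigma> a, \<sigma> b)\<close>
  between the supports is onto, so the patterns agree. Then a nonzero entry
  \<open>C\<^sub>i\<^sub>j = L\<^sub>i\<^sub>,\<^sub>\<sigma>\<^sub>j\<close> of \<open>C = L P\<close> forces the support of row (column) \<open>i\<close> of \<open>S\<close> into that of
  row (column) \<open>j\<close>, which is exactly \<open>S\<close>- (\<open>S\<^sup>T\<close>-) consistency.
\<close>

lemma sparsity_pattern_eq_0_iff:
  "sparsity_pattern \<Gamma> \<Lambda> $ i $ j = 0 \<longleftrightarrow> (\<forall>\<gamma>\<in>\<Gamma>. \<Lambda> \<gamma> $ i $ j = 0)"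
  by (simp add: sparsity_pattern_def)

lemma sparsity_pattern_0_or_1:
  "sparsity_pattern \<Gamma> \<Lambda> $ i $ j = 0 \<or> sparsity_pattern \<Gamma> \<Lambda> $ i $ j = 1"
  by (simp add: sparsity_pattern_def)

lemma linear_matrix_sandwich_nth:
  "linear (\<lambda>M :: real^'n^'m. ((A :: real^'m^'p) ** M ** (B :: real^'q^'n)) $ p $ q)"
  by (intro linearI)
    (simp_all add: matrix_add_ldistrib matrix_scalar_ac matrix_matrix_mult_def
      algebra_simps sum.distrib sum_distrib_left)

lemma matrix_sandwich_elementary_nth:
  "((A :: real^'m^'p) ** (\<chi> i j. if i = a \<and> j = b then 1 else 0) ** (B :: real^'q^'n)) $ p $ q
     = A $ p $ a * B $ b $ q"
proof -
  have "(\<Sum>k\<in>UNIV. A $ p $ k * (if k = a \<and> l = b then 1 else 0)) = (if l = b then A $ p $ a else 0)"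
    for l
    by (cases "l = b") (simp_all add: if_distrib[of "\<lambda>x. y * x" for y] cong: if_cong)
  then show ?thesis
    by (simp add: matrix_matrix_mult_def if_distrib[of "\<lambda>x. x * y" for y] cong: if_cong)
qed

lemma sparsity_pattern_congruence_nonzero:
  fixes \<Lambda> :: "'g \<Rightarrow> real^'n^'m" and L :: "real^'p^'m" and R :: "real^'q^'n"
  assumes spans: "supported_on (sparsity_pattern \<Gamma> \<Lambda>) \<subseteq> span (\<Lambda> ` \<Gamma>)"
    and S_ab: "sparsity_pattern \<Gamma> \<Lambda> $ a $ b \<noteq> 0"
    and "L $ a $ p \<noteq> 0" and "R $ b $ q \<noteq> 0"
  shows "sparsity_pattern \<Gamma> (\<lambda>\<gamma>. transpose L ** \<Lambda> \<gamma> ** R) $ p $ q \<noteq> 0"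
proof
  define f where "f M = (transpose L ** M ** R) $ p $ q" for M
  define E :: "real^'n^'m" where "E = (\<chi> i j. if i = a \<and> j = b then 1 else 0)"
  assume "sparsity_pattern \<Gamma> (\<lambda>\<gamma>. transpose L ** \<Lambda> \<gamma> ** R) $ p $ q = 0"
  then have "f M = 0" if "M \<in> \<Lambda> ` \<Gamma>" for M
    using that by (auto simp: sparsity_pattern_eq_0_iff f_def)
  moreover have "E \<in> span (\<Lambda> ` \<Gamma>)"
    using spans S_ab by (auto simp: supported_on_def E_def)
  ultimately have "f E = 0"
    using linear_eq_0_on_span[OF linear_matrix_sandwich_nth] unfolding f_def by blast
  moreover have "f E = L $ a $ p * R $ b $ q"
    by (simp add: f_def E_def matrix_sandwich_elementary_nth transpose_def)
  ultimately show False
    using assms(3,4) by simp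
qed

lemma transpose_perm_matrix_mul_nth:
  "(transpose (perm_matrix \<sigma>) ** (A :: real^'n^'m)) $ i $ j = A $ \<sigma> i $ j"
  by (simp add: matrix_matrix_mult_def transpose_def perm_matrix_def
      if_distrib[of "\<lambda>x. x * y" for y] cong: if_cong)

lemma mul_perm_matrix_nth:
  "((A :: real^'m^'k) ** perm_matrix \<sigma>) $ i $ j = A $ i $ \<sigma> j"
  by (simp add: matrix_matrix_mult_def perm_matrix_def
      if_distrib[of "\<lambda>x. y * x" for y] cong: if_cong)

lemma perm_matrix_conj_nth:
  "(transpose (perm_matrix \<sigma>) ** (A :: real^'m^'m) ** perm_matrix \<sigma>) $ i $ j = A $ \<sigma> i $ \<sigma> j"
  by (simp add: mul_perm_matrix_nth transpose_perm_matrix_mul_nth)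

lemma perm_matrix_mul_transpose:
  assumes "bij \<sigma>"
  shows "perm_matrix \<sigma> ** transpose (perm_matrix \<sigma>) = mat 1"
proof -
  have "(if i = \<sigma> k then 1 else 0) * (if j = \<sigma> k then 1 else 0)
          = (if k = inv \<sigma> i then (if i = j then 1 else 0) else (0::real))" for i j k
    using assms by (auto simp: bij_inv_eq_iff)
  then show ?thesis
    by (simp add: vec_eq_iff matrix_matrix_mult_def transpose_def perm_matrix_def mat_def)
qed

lemma nonzero_iff_of_nnz_le:
  fixes S :: "real^'n^'m" and T :: "real^'q^'p"
  assumes "inj f" and "inj g"
    and support_mono: "\<And>i j. S $ i $ j \<noteq> 0 \<Longrightarrow> T $ f i $ g j \<noteq> 0"
    and "nnz T \<le> nnz S"
  shows "T $ f i $ g j \<noteq> 0 \<longleftrightarrow> S $ i $ j \<noteq> 0"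
proof
  define h where "h = map_prod f g"
  define A where "A = {(i, j). S $ i $ j \<noteq> 0}"
  define B where "B = {(i, j). T $ i $ j \<noteq> 0}"
  have "inj h"
    using assms(1,2) by (simp add: h_def prod.inj_map)
  have "h ` A \<subseteq> B"
    using support_mono by (auto simp: h_def A_def B_def)
  moreover have "card B \<le> card (h ` A)"
    using \<open>nnz T \<le> nnz S\<close> \<open>inj h\<close> by (simp add: nnz_def A_def B_def card_image inj_on_subset)
  ultimately have "h ` A = B"
    by (simp add: card_subset_eq le_antisym card_mono)
  moreover assume "T $ f i $ g j \<noteq> 0"
  ultimately have "h (i, j) \<in> h ` A"
    by (simp add: h_def B_def)
  then show "S $ i $ j \<noteq> 0"
    using \<open>inj h\<close> by (auto simp: A_def dest: injD)
qed (rule support_mono)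

text \<open>For a 0/1 pattern, \<open>(S (1 - S)\<^sup>T)\<^sub>i\<^sub>j\<close> counts the columns in the support of row \<open>i\<close>
  but not of row \<open>j\<close>.\<close>

lemma S_consistent_if_row_supports_nested:
  fixes S :: "real^'n^'m" and C :: "real^'m^'m"
  assumes S01: "\<And>i j. S $ i $ j = 0 \<or> S $ i $ j = 1"
    and nested: "\<And>i j k. C $ i $ j \<noteq> 0 \<Longrightarrow> S $ i $ k \<noteq> 0 \<Longrightarrow> S $ j $ k \<noteq> 0"
  shows "S_consistent S C"
  unfolding S_consistent_def Let_def
proof (intro allI impI)
  fix i j
  assume excluded: "max 0 (((\<chi> i j. 1) - S ** transpose ((\<chi> i j. 1) - S)) $ i $ j) = (0::real)"
  show "C $ i $ j = 0"
  proof (rule ccontr)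
    assume "C $ i $ j \<noteq> 0"
    then have "\<forall>k. S $ i $ k * (1 - S $ j $ k) = 0"
      using nested S01 by (metis diff_self mult_eq_0_iff)
    then have "(\<Sum>k\<in>UNIV. S $ i $ k * (1 - S $ j $ k)) = 0"
      by (intro sum.neutral) blast
    then have "(S ** transpose ((\<chi> i j. 1) - S)) $ i $ j = 0"
      by (simp add: matrix_matrix_mult_def transpose_def)
    then show False
      using excluded by simp
  qed
qed

theorem mainTheorem3:
  fixes \<Gamma> :: "'g set"
    and \<Lambda> :: "'g \<Rightarrow> real^'m^'m"
    and L :: "real^'m^'m"
    and \<sigma> :: "'m \<Rightarrow> 'm"
  assumes L_inv: "invertible L"
    and \<sigma>_perm: "bij \<sigma>"
    and L_\<sigma>: "\<forall>i. L $ i $ \<sigma> i \<noteq> 0"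
    and span_eq: "span (\<Lambda> ` \<Gamma>) = supported_on (sparsity_pattern \<Gamma> \<Lambda>)"
  shows "(let S = sparsity_pattern \<Gamma> \<Lambda>;
              S' = sparsity_pattern \<Gamma> (\<lambda>\<gamma>. transpose L ** \<Lambda> \<gamma> ** L);
              P = perm_matrix \<sigma>
          in (\<forall>i j. S $ i $ j \<noteq> 0 \<longrightarrow> (transpose P ** S' ** P) $ i $ j \<noteq> 0)
             \<and> (nnz S' \<le> nnz S \<longrightarrow>
                  S = transpose P ** S' ** P
                  \<and> (\<exists>C. L = C ** transpose P \<and> S_consistent S C \<and> S_consistent (transpose S) C)))"
proof -
  define S where "S = sparsity_pattern \<Gamma> \<Lambda>"
  define S' where "S' = sparsity_pattern \<Gamma> (\<lambda>\<gamma>. transpose L ** \<Lambda> \<gamma> ** L)"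
  define P where "P = perm_matrix \<sigma>"
  have support_transfer: "S' $ p $ q \<noteq> 0"
    if "S $ a $ b \<noteq> 0" "L $ a $ p \<noteq> 0" "L $ b $ q \<noteq> 0" for a b p q
    using sparsity_pattern_congruence_nonzero[of \<Gamma> \<Lambda>] span_eq that by (simp add: S_def S'_def)
  have support_mono: "S' $ \<sigma> i $ \<sigma> j \<noteq> 0" if "S $ i $ j \<noteq> 0" for i j
    using support_transfer that L_\<sigma> by blast
  moreover have "S = transpose P ** S' ** P \<and> (\<exists>C. L = C ** transpose P \<and> S_consistent S C
                   \<and> S_consistent (transpose S) C)" if "nnz S' \<le> nnz S"
  proof -
    have "S' $ \<sigma> i $ \<sigma> j \<noteq> 0 \<longleftrightarrow> S $ i $ j \<noteq> 0" for i j
      using nonzero_iff_of_nnz_le[of \<sigma> \<sigma> S S', OF _ _ support_mono that] \<sigma>_perm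
      by (simp add: bij_is_inj)
    then have S_eq: "S $ i $ j = S' $ \<sigma> i $ \<sigma> j" for i j
      using sparsity_pattern_0_or_1 unfolding S_def S'_def by metis
    have S01: "S $ i $ j = 0 \<or> S $ i $ j = 1" for i j
      unfolding S_def by (rule sparsity_pattern_0_or_1)
    have "L = (L ** P) ** transpose P"
      by (simp add: P_def \<sigma>_perm perm_matrix_mul_transpose flip: matrix_mul_assoc)
    moreover have "S_consistent S (L ** P)"
      using S01 support_transfer L_\<sigma> by (intro S_consistent_if_row_supports_nested)
        (auto simp: P_def mul_perm_matrix_nth S_eq)
    moreover have "S_consistent (transpose S) (L ** P)"
      using S01 support_transfer L_\<sigma> by (intro S_consistent_if_row_supports_nested)
        (auto simp: P_def mul_perm_matrix_nth S_eq transpose_def)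
    ultimately show ?thesis
      by (auto simp: vec_eq_iff P_def perm_matrix_conj_nth S_eq)
  qed
  ultimately show ?thesis
    by (auto simp: Let_def P_def perm_matrix_conj_nth simp flip: S_def S'_def)
qed

end
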